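(* Let $n_1,n_2,n_3$ be pairwise coprime positive integers forming a minimal system of generators of $\mathcal S=\langle n_1,n_2,n_3\rangle$, and let $\{i,j,k\}=\{1,2,3\}$. Put $\lambda_{ij}=[-n_in_j^{-1}]_{n_k}$ and $\lambda_{ik}=[-n_in_k^{-1}]_{n_j}$. If $\lambda_{ij}<\frac{n_k}{2}$ and $\lambda_{ik}<\frac{n_j}{2}$, then $c_k=n_j-\lambda_{ik}$ and $c_j=n_k-\lambda_{ij}$.
   Context: $\mathbb N$ denotes the nonnegative integers. For integers $a_1,\dots,a_r$, $\langle a_1,\dots,a_r\rangle=\{\sum t_la_l: t_l\in\mathbb N\}$. Minimal system of generators means that no $n_l$ belongs to the monoid generated by the other two. For an integer $m$ and $n\ge 1$, $[m]_n\in\{0,\dots,n-1\}$ denotes the remainder of $m$ upon division by $n$; for $a$ coprime to $n$, the symbol $a^{-1}$ inside $[\cdot]_n$ denotes a multiplicative inverse of $a$ modulo $n$. For $\{i,j,k\}=\{1,2,3\}$, $\mathcal S_k=\{M\in\mathbb N: Mn_k\in\langle n_i,n_j\rangle\}$ and $c_k=\min(\mathcal S_k\setminus\{0\})$ (the minimal relation for $n_k$); $c_j$ is defined analogously with $\mathcal S_j=\{M\in\mathbb N: Mn_j\in\langle n_i,n_k\rangle\}$. *)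

theory Defs
  imports Main
begin

definition gen_monoid :: "nat list \<Rightarrow> nat set" where
  "gen_monoid as = {m. \<exists>t :: nat \<Rightarrow> nat. m = (\<Sum>l<length as. t l * as ! l)}"

definition S_set :: "nat \<Rightarrow> nat \<Rightarrow> nat \<Rightarrow> nat set" where
  "S_set nk ni nj = {M. M * nk \<in> gen_monoid [ni, nj]}"

definition c_min :: "nat \<Rightarrow> nat \<Rightarrow> nat \<Rightarrow> nat" where
  "c_min nk ni nj = (LEAST M. M \<in> S_set nk ni nj - {0})"

definition minimal_gens :: "(nat \<Rightarrow> nat) \<Rightarrow> bool" where
  "minimal_gens n \<longleftrightarrow> n 1 \<notin> gen_monoid [n 2, n 3] \<and> n 2 \<notin> gen_monoid [n 1, n 3]
     \<and> n 3 \<notin> gen_monoid [n 1, n 2]"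

end

theory Submission imports Defs begin

text \<open>Write \<open>a = n\<^sub>i\<close>, \<open>b = n\<^sub>j\<close>, \<open>c = n\<^sub>k\<close>, \<open>l = \<lambda>\<^sub>i\<^sub>j\<close>, \<open>u = \<lambda>\<^sub>i\<^sub>k\<close>. By construction
  \<open>a + l b\<close> is divisible by \<open>c\<close> and \<open>a + u c\<close> by \<open>b\<close>, so \<open>a + l b + u c\<close> is a positive
  multiple \<open>r b c\<close>; if \<open>r \<ge> 2\<close> then \<open>a = ((r - 1) c - l) b + (b - u) c \<in> \<langle>b, c\<rangle>\<close>,
  contradicting minimality, hence \<open>a + l b + u c = b c\<close>. This identity exhibits
  \<open>(b - u) c = a + l b\<close>, so \<open>c\<^sub>k \<le> b - u\<close>. Conversely, substituting the identity into a
  relation \<open>M c = x a + y b\<close> gives \<open>M + x u = q b\<close> with \<open>q c = x (c - l) + y\<close>; the bound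
  \<open>l < c/2\<close> forces \<open>2 q > x\<close>, and then \<open>u < b/2\<close> yields \<open>M \<ge> b - u\<close>.\<close>

lemma gen_monoid_pair: "gen_monoid [x, y] = {m. \<exists>s t. m = s * x + t * y}"
proof -
  have sum_pair: "(\<Sum>l<length [x, y]. f l * [x, y] ! l) = f 0 * x + f 1 * y" for f :: "nat \<Rightarrow> nat"
    by (simp add: numeral_2_eq_2)
  have "(\<exists>f. m = (\<Sum>l<length [x, y]. f l * [x, y] ! l)) \<longleftrightarrow> (\<exists>s t. m = s * x + t * y)" for m
  proof
    assume "\<exists>f. m = (\<Sum>l<length [x, y]. f l * [x, y] ! l)"
    then show "\<exists>s t. m = s * x + t * y"
      unfolding sum_pair by blast
  next
    assume "\<exists>s t. m = s * x + t * y"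
    then obtain s t where "m = s * x + t * y"
      by blast
    then show "\<exists>f. m = (\<Sum>l<length [x, y]. f l * [x, y] ! l)"
      by (intro exI[of _ "\<lambda>l. if l = 0 then s else t"]) (simp add: sum_pair)
  qed
  then show ?thesis
    unfolding gen_monoid_def by blast
qed

lemma gen_monoid_pair_commute: "gen_monoid [x, y] = gen_monoid [y, x]"
  unfolding gen_monoid_pair by (metis add.commute)

lemma gen_monoid_pair_int:
  "a \<in> gen_monoid [b, c] \<longleftrightarrow> (\<exists>X Y. 0 \<le> X \<and> 0 \<le> Y \<and> int a = X * int b + Y * int c)"
proof
  assume "a \<in> gen_monoid [b, c]"
  then obtain s t where "a = s * b + t * c"
    by (auto simp: gen_monoid_pair)
  then show "\<exists>X Y. 0 \<le> X \<and> 0 \<le> Y \<and> int a = X * int b + Y * int c"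
    by (intro exI[of _ "int s"] exI[of _ "int t"]) simp
next
  assume "\<exists>X Y. 0 \<le> X \<and> 0 \<le> Y \<and> int a = X * int b + Y * int c"
  then obtain X Y where "0 \<le> X" "0 \<le> Y" "int a = X * int b + Y * int c"
    by blast
  then have "int a = int (nat X * b + nat Y * c)"
    by simp
  then show "a \<in> gen_monoid [b, c]"
    unfolding gen_monoid_pair of_nat_eq_iff by blast
qed

lemma index_permutations:
  assumes "{i, j, k} = {1, 2, 3::nat}"
  shows "(i, j, k) \<in> {(1, 2, 3), (1, 3, 2), (2, 1, 3), (2, 3, 1), (3, 1, 2), (3, 2, 1)}"
proof -
  have range: "i \<in> {1, 2, 3}" "j \<in> {1, 2, 3}" "k \<in> {1, 2, 3}"
    using assms by blast+
  have "card {i, j, k} = 3"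
    using assms by simp
  then have "i \<noteq> j" "i \<noteq> k" "j \<noteq> k"
    by (auto simp: card_insert_if split: if_splits)
  with range show ?thesis
    by auto
qed

lemma dvd_add_residue_mult:
  fixes a b c :: nat and inv :: int
  assumes "(inv * int b) mod int c = 1 mod int c"
  shows "int c dvd int a + ((- int a * inv) mod int c) * int b"
proof -
  obtain p where p: "inv * int b - 1 = int c * p"
    using assms by (auto simp: mod_eq_dvd_iff)
  define q where "q = (- int a * inv) div int c"
  have residue: "(- int a * inv) mod int c = - int a * inv - int c * q"
    unfolding q_def by (simp add: minus_div_mult_eq_mod[symmetric])
  have "int a + ((- int a * inv) mod int c) * int b = - int a * (inv * int b - 1) - int c * q * int b"
    unfolding residue by (simp add: algebra_simps)
  also have "\<dots> = int c * (- int a * p - q * int b)"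
    unfolding p by (simp add: algebra_simps)
  finally show ?thesis
    by simp
qed

lemma residue_combination_eq_product:
  fixes a b c :: nat and l u :: int
  assumes "0 < a" and "coprime b c" and "a \<notin> gen_monoid [b, c]"
    and "0 \<le> l" "l < int c" "int c dvd int a + l * int b"
    and "0 \<le> u" "u < int b" "int b dvd int a + u * int c"
  shows "int a + l * int b + u * int c = int b * int c"
proof -
  have "int c dvd int a + l * int b + u * int c"
    using assms(6) by simp
  moreover have "int b dvd int a + u * int c + l * int b"
    using assms(9) by simp
  ultimately have "int b * int c dvd int a + l * int b + u * int c"
    using assms(2) by (intro divides_mult) (simp_all add: ac_simps)
  then obtain r where r: "int a + l * int b + u * int c = int b * int c * r"
    by blast
  have "0 < int b * int c * r"
    using r assms(1,4,7) by (smt (verit) mult_nonneg_nonneg of_nat_0_le_iff of_nat_0_less_iff)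
  then have "0 < r"
    by (simp add: zero_less_mult_iff mult_less_0_iff)
  have "r = 1"
  proof (rule ccontr)
    assume "r \<noteq> 1"
    with \<open>0 < r\<close> have "1 * int c \<le> (r - 1) * int c"
      by (intro mult_right_mono) simp_all
    moreover have "int a = ((r - 1) * int c - l) * int b + (int b - u) * int c"
      using r by (simp add: algebra_simps)
    ultimately have "a \<in> gen_monoid [b, c]"
      using assms(5,8) unfolding gen_monoid_pair_int
      by (intro exI[of _ "(r - 1) * int c - l"] exI[of _ "int b - u"]) simp
    with assms(3) show False ..
  qed
  with r show ?thesis
    by simp
qed

lemma S_set_complement_mem:
  fixes a b c :: nat and l u :: int
  assumes "0 \<le> l" and "0 \<le> u" "u < int b"
    and "int a + l * int b + u * int c = int b * int c"
  shows "nat (int b - u) \<in> S_set c a b - {0}"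
proof -
  have "int (nat (int b - u) * c) = 1 * int a + l * int b"
    using assms(3,4) by (simp add: algebra_simps)
  then have "nat (int b - u) * c \<in> gen_monoid [a, b]"
    unfolding gen_monoid_pair_int using assms(1) by (intro exI[of _ 1] exI[of _ l]) simp
  moreover have "0 < nat (int b - u)"
    using assms(3) by simp
  ultimately show ?thesis
    unfolding S_set_def by simp
qed

lemma S_set_lower_bound:
  fixes a b c M :: nat and l u :: int
  assumes "coprime b c" and "2 * l < int c" and "0 \<le> u" "2 * u < int b"
    and identity: "int a + l * int b + u * int c = int b * int c"
    and M: "M \<in> S_set c a b - {0}"
  shows "int b - u \<le> int M"
proof -
  obtain x y where x: "0 \<le> x" and "0 \<le> y" and rel: "int M * int c = x * int a + y * int b"
    using M unfolding S_set_def gen_monoid_pair_int by auto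
  have "x * int a = x * (int b * int c - l * int b - u * int c)"
    using identity by simp
  then have "(int M + x * u) * int c = (x * (int c - l) + y) * int b"
    using rel by (simp add: algebra_simps)
  moreover have "coprime (int b) (int c)"
    using assms(1) by simp
  ultimately obtain q where q: "int M + x * u = q * int b"
    by (metis coprime_dvd_mult_left_iff dvd_triv_right dvdE mult.commute)
  with \<open>(int M + x * u) * int c = _\<close> have qc: "q * int c = x * (int c - l) + y"
    using assms(3,4) by (simp add: mult.commute mult.left_commute)
  show ?thesis
  proof (cases "x = 0")
    case True
    then have "0 < q * int b"
      using q M by simp
    then have "int b \<le> q * int b"
      by (simp add: zero_less_mult_iff)
    with q True assms(3) show ?thesis
      by simp
  next
    case False
    have "x * int c < 2 * (x * (int c - l))"
      using False x assms(2) by (simp add: algebra_simps)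
    also have "\<dots> \<le> 2 * q * int c"
      using qc \<open>0 \<le> y\<close> by simp
    finally have "x + 1 \<le> 2 * q"
      by (simp add: mult_less_cancel_right)
    then have "(x + 1) * int b \<le> 2 * q * int b"
      by (simp add: mult_right_mono)
    moreover have "0 \<le> (x - 1) * (int b - 2 * u)"
      using False x assms(4) by simp
    ultimately show ?thesis
      using q by (simp add: algebra_simps)
  qed
qed

lemma c_min_eq_complement:
  fixes a b c :: nat and l u :: int
  assumes "coprime b c" and "0 \<le> l" "2 * l < int c" and "0 \<le> u" "2 * u < int b"
    and "int a + l * int b + u * int c = int b * int c"
  shows "int (c_min c a b) = int b - u"
proof -
  have "c_min c a b = nat (int b - u)"
    unfolding c_min_def
  proof (rule Least_equality)
    show "nat (int b - u) \<in> S_set c a b - {0}"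
      using assms by (intro S_set_complement_mem) simp_all
    show "nat (int b - u) \<le> M" if "M \<in> S_set c a b - {0}" for M
      using S_set_lower_bound[OF assms(1,3-6) that] by simp
  qed
  then show ?thesis
    using assms(5) by simp
qed

theorem mainTheorem7:
  fixes n :: "nat \<Rightarrow> nat" and i j k :: nat and inv_j inv_k :: int
  assumes pos: "\<forall>l\<in>{1,2,3}. n l > 0"
    and cop: "coprime (n 1) (n 2)" "coprime (n 1) (n 3)" "coprime (n 2) (n 3)"
    and mingen: "minimal_gens n"
    and idx: "{i, j, k} = {1, 2, 3::nat}"
    and invj: "(inv_j * int (n j)) mod int (n k) = 1 mod int (n k)"
    and invk: "(inv_k * int (n k)) mod int (n j) = 1 mod int (n j)"
    and lij: "lambda_ij = (- int (n i) * inv_j) mod int (n k)"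
    and lik: "lambda_ik = (- int (n i) * inv_k) mod int (n j)"
    and h1: "2 * lambda_ij < int (n k)"
    and h2: "2 * lambda_ik < int (n j)"
  shows "int (c_min (n k) (n i) (n j)) = int (n j) - lambda_ik
       \<and> int (c_min (n j) (n i) (n k)) = int (n k) - lambda_ij"
proof -
  have ni: "0 < n i" and nj: "0 < n j" and nk: "0 < n k" and cop_jk: "coprime (n j) (n k)"
    and not_gen: "n i \<notin> gen_monoid [n j, n k]"
    using index_permutations[OF idx] pos cop mingen
    by (auto simp: minimal_gens_def gen_monoid_pair_commute coprime_commute)
  have l_nonneg: "0 \<le> lambda_ij" and u_nonneg: "0 \<le> lambda_ik"
    using lij lik nj nk by simp_all
  have "int (n i) + lambda_ij * int (n j) + lambda_ik * int (n k) = int (n j) * int (n k)"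
    using ni cop_jk not_gen l_nonneg h1 u_nonneg h2
      dvd_add_residue_mult[OF invj, of "n i"] dvd_add_residue_mult[OF invk, of "n i"]
    unfolding lij[symmetric] lik[symmetric]
    by (intro residue_combination_eq_product) simp_all
  then show ?thesis
    using c_min_eq_complement[OF cop_jk l_nonneg h1 u_nonneg h2]
      c_min_eq_complement[of "n k" "n j" lambda_ik lambda_ij "n i"] cop_jk l_nonneg h1 u_nonneg h2
    by (simp add: coprime_commute algebra_simps)
qed

end
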